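(* For every convex pentagon $K$ we have $\Omega(K)<2\Delta(K)$. Moreover, the constant $2$ cannot be replaced by a smaller one: for every $\eta<2$ there exists a convex pentagon $K$ with $\Omega(K)>\eta\,\Delta(K)$.
   Context: For a convex pentagon $K=A_1A_2A_3A_4A_5$ (indices modulo $5$), $\Omega(K)=\sum_{k=1}^5\Delta(A_kA_{k+1}A_{k+2})$ is the sum of the areas of the five triangles formed by three consecutive vertices. $\Delta(\cdot)$ denotes area. *)

theory Defs
  imports "HOL-Analysis.Analysis"
begin

text \<open>Signed (doubled) orientation of an ordered triple of points in the plane.\<close>
definition orient :: "real^2 \<Rightarrow> real^2 \<Rightarrow> real^2 \<Rightarrow> real" where
  "orient a b c = (b$1 - a$1) * (c$2 - a$2) - (b$2 - a$2) * (c$1 - a$1)"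

text \<open>A pentagon is given by its vertices A 0, ..., A 4 (indices taken modulo 5).
  It is a convex pentagon iff the vertices are listed in cyclic order along the
  boundary of a strictly convex polygon, i.e. every ordered triple A i, A j, A k
  with i < j < k < 5 has the same (nonzero) orientation.\<close>
definition convex_pentagon :: "(nat \<Rightarrow> real^2) \<Rightarrow> bool" where
  "convex_pentagon A \<longleftrightarrow>
     (\<forall>i j k. i < j \<and> j < k \<and> k < 5 \<longrightarrow> orient (A i) (A j) (A k) > 0) \<or>
     (\<forall>i j k. i < j \<and> j < k \<and> k < 5 \<longrightarrow> orient (A i) (A j) (A k) < 0)"

definition pent_area :: "(nat \<Rightarrow> real^2) \<Rightarrow> real" where
  "pent_area A = measure lebesgue (convex hull {A 0, A 1, A 2, A 3, A 4})"

definition tri_area :: "real^2 \<Rightarrow> real^2 \<Rightarrow> real^2 \<Rightarrow> real" where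
  "tri_area a b c = measure lebesgue (convex hull {a, b, c})"

definition Omega :: "(nat \<Rightarrow> real^2) \<Rightarrow> real" where
  "Omega A = (\<Sum>k<5. tri_area (A (k mod 5)) (A ((k + 1) mod 5)) (A ((k + 2) mod 5)))"

end

theory Submission
  imports Defs
begin

text \<open>Triangulate K from A0. Then 2\<Delta>(K) - \<Omega>(K) = \<Delta>(A0A2A4) + \<Delta>(A0A1A3) - \<Delta>(A0A1A4),
  an identity of polynomials in the coordinates. This is positive: if \<Delta>(A0A1A3) \<ge> \<Delta>(A0A1A4)
  trivially, and otherwise because a second polynomial identity writes its product with
  \<Delta>(A1A3A4) as a sum of two positive terms and one nonnegative term. For sharpness, let the
  vertices A0 and A4 of the pentagon (e,-e), (1,0), (0,1), (-1,0), (-e,-e) collapse onto the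
  base of the triangle A1A2A3: then \<Omega> = 2 + 2e^2 and \<Delta> = 1 + e + e^2.\<close>

lemma orient_rotate: "orient a b c = orient b c a"
  by (simp add: orient_def algebra_simps)

lemma orient_swap_12: "orient b a c = - orient a b c"
  by (simp add: orient_def algebra_simps)

lemma orient_swap_23: "orient a c b = - orient a b c"
  by (simp add: orient_def algebra_simps)

lemma orient_reverse: "orient c b a = - orient a b c"
  by (simp add: orient_def algebra_simps)

lemma orient_degenerate: "orient a a b = 0" "orient a b a = 0" "orient a b b = 0"
  by (simp_all add: orient_def)

lemma orient_affine:
  assumes "u + v = 1"
  shows "orient a b (u *\<^sub>R x + v *\<^sub>R y) = u * orient a b x + v * orient a b y"
proof -
  have v: "v = 1 - u" using assms by simp
  show ?thesis unfolding v by (simp add: orient_def algebra_simps)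
qed

lemma tri_area_eq_orient: "tri_area a b c = \<bar>orient a b c\<bar> / 2"
proof -
  have "compact (convex hull {a, b, c})"
    by (intro finite_imp_compact_convex_hull) auto
  then have "tri_area a b c = measure lborel (convex hull {a, b, c})"
    unfolding tri_area_def by (intro measure_completion) (auto dest: compact_imp_closed)
  also have "\<dots> = \<bar>orient a b c\<bar> / 2"
    by (subst content_triangle) (simp add: orient_def abs_minus_commute algebra_simps)
  finally show ?thesis .
qed

lemma convex_hull_subset_orient_ge:
  assumes "\<forall>p\<in>P. orient a b p \<ge> 0"
  shows "convex hull P \<subseteq> {x. orient a b x \<ge> 0}"
proof (rule hull_minimal)
  show "convex {x. orient a b x \<ge> 0}"
    unfolding convex_def by (auto simp: orient_affine intro!: add_nonneg_nonneg mult_nonneg_nonneg)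
qed (use assms in auto)

lemma convex_hull_subset_orient_le:
  assumes "\<forall>p\<in>P. orient a b p \<le> 0"
  shows "convex hull P \<subseteq> {x. orient a b x \<le> 0}"
proof -
  have "convex hull P \<subseteq> {x. orient b a x \<ge> 0}"
    using assms by (intro convex_hull_subset_orient_ge) (auto simp: orient_swap_12[of b a])
  then show ?thesis by (auto simp: orient_swap_12[of b a])
qed

lemma in_convex_hull_triangle_if_orient_nonneg:
  assumes "orient a b c > 0" "orient b c x \<ge> 0" "orient c a x \<ge> 0" "orient a b x \<ge> 0"
  shows "x \<in> convex hull {a, b, c}"
proof -
  define D where "D = orient a b c"
  define u where "u = orient b c x / D"
  define v where "v = orient c a x / D"
  define w where "w = orient a b x / D"
  have "D > 0" using assms(1) by (simp add: D_def)
  have "orient b c x + orient c a x + orient a b x = D"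
    unfolding D_def orient_def by (simp add: algebra_simps)
  with \<open>D > 0\<close> have "u + v + w = 1"
    unfolding u_def v_def w_def by (simp add: add_divide_distrib[symmetric])
  moreover \<comment> \<open>x has barycentric coordinates u, v, w (Cramer's rule)\<close>
  have "D * x$1 = orient b c x * a$1 + orient c a x * b$1 + orient a b x * c$1"
    and "D * x$2 = orient b c x * a$2 + orient c a x * b$2 + orient a b x * c$2"
    unfolding D_def orient_def by algebra+
  with \<open>D > 0\<close> have "x = u *\<^sub>R a + v *\<^sub>R b + w *\<^sub>R c"
    unfolding vec_eq_iff forall_2 u_def v_def w_def by (simp add: field_simps)
  moreover have "u \<ge> 0" "v \<ge> 0" "w \<ge> 0"
    unfolding u_def v_def w_def using \<open>D > 0\<close> assms by auto
  ultimately show ?thesis unfolding convex_hull_3 by blast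
qed

lemma negligible_orient_eq_0:
  assumes "a \<noteq> b"
  shows "negligible {x. orient a b x = 0}"
proof -
  define n :: "real^2" where "n = (\<chi> i. if i = 1 then a$2 - b$2 else b$1 - a$1)"
  have n: "n$1 = a$2 - b$2" "n$2 = b$1 - a$1" by (simp_all add: n_def)
  have "n \<noteq> 0"
    using assms n by (auto simp: vec_eq_iff forall_2)
  moreover have "{x. orient a b x = 0} = {x. n \<bullet> x = n \<bullet> a}"
    by (auto simp: inner_vec_def sum_2 n orient_def algebra_simps)
  ultimately show ?thesis using negligible_hyperplane by auto
qed

lemma negligible_Int_opposite_sides:
  assumes "a \<noteq> b" "S \<subseteq> {x. orient a b x \<le> 0}" "T \<subseteq> {x. orient a b x \<ge> 0}"
  shows "negligible (S \<inter> T)"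
  using assms by (intro negligible_subset[OF negligible_orient_eq_0[OF \<open>a \<noteq> b\<close>]]) force

definition ccw_pentagon :: "(nat \<Rightarrow> real^2) \<Rightarrow> bool" where
  "ccw_pentagon A \<longleftrightarrow>
     (\<forall>i j k. i < j \<and> j < k \<and> k < 5 \<longrightarrow> orient (A i) (A j) (A k) > 0)"

definition reverse_pentagon :: "(nat \<Rightarrow> real^2) \<Rightarrow> nat \<Rightarrow> real^2" where
  "reverse_pentagon A k = A (4 - k)"

lemma ccw_pentagonD:
  assumes "ccw_pentagon A"
  shows "orient (A 0) (A 1) (A 2) > 0" "orient (A 0) (A 1) (A 3) > 0" "orient (A 0) (A 1) (A 4) > 0"
    "orient (A 0) (A 2) (A 3) > 0" "orient (A 0) (A 2) (A 4) > 0" "orient (A 0) (A 3) (A 4) > 0"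
    "orient (A 1) (A 2) (A 3) > 0" "orient (A 1) (A 2) (A 4) > 0" "orient (A 1) (A 3) (A 4) > 0"
    "orient (A 2) (A 3) (A 4) > 0"
  using assms unfolding ccw_pentagon_def by simp_all

lemma ccw_pentagonI:
  assumes "orient (A 0) (A 1) (A 2) > 0" "orient (A 0) (A 1) (A 3) > 0" "orient (A 0) (A 1) (A 4) > 0"
    "orient (A 0) (A 2) (A 3) > 0" "orient (A 0) (A 2) (A 4) > 0" "orient (A 0) (A 3) (A 4) > 0"
    "orient (A 1) (A 2) (A 3) > 0" "orient (A 1) (A 2) (A 4) > 0" "orient (A 1) (A 3) (A 4) > 0"
    "orient (A 2) (A 3) (A 4) > 0"
  shows "ccw_pentagon A"
  unfolding ccw_pentagon_def
proof (intro allI impI)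
  fix i j k :: nat
  assume ijk: "i < j \<and> j < k \<and> k < 5"
  then have "i = 0 \<or> i = 1 \<or> i = 2" "j = 1 \<or> j = 2 \<or> j = 3" "k = 2 \<or> k = 3 \<or> k = 4"
    by auto
  then show "orient (A i) (A j) (A k) > 0" using assms ijk by auto
qed

lemma ccw_reverse_pentagon_iff:
  "ccw_pentagon (reverse_pentagon A) \<longleftrightarrow>
     (\<forall>i j k. i < j \<and> j < k \<and> k < 5 \<longrightarrow> orient (A i) (A j) (A k) < 0)"
proof
  assume ccw: "ccw_pentagon (reverse_pentagon A)"
  show "\<forall>i j k. i < j \<and> j < k \<and> k < 5 \<longrightarrow> orient (A i) (A j) (A k) < 0"
  proof (intro allI impI)
    fix i j k :: nat
    assume ijk: "i < j \<and> j < k \<and> k < 5"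
    then have "orient (A (4 - (4 - k))) (A (4 - (4 - j))) (A (4 - (4 - i))) > 0"
      using ccw[unfolded ccw_pentagon_def reverse_pentagon_def, rule_format, of "4 - k" "4 - j" "4 - i"]
      by linarith
    with ijk have "orient (A k) (A j) (A i) > 0"
      by (simp add: Suc_leI)
    then show "orient (A i) (A j) (A k) < 0" by (simp add: orient_reverse[of "A i"])
  qed
next
  assume neg: "\<forall>i j k. i < j \<and> j < k \<and> k < 5 \<longrightarrow> orient (A i) (A j) (A k) < 0"
  show "ccw_pentagon (reverse_pentagon A)"
    unfolding ccw_pentagon_def reverse_pentagon_def
  proof (intro allI impI)
    fix i j k :: nat
    assume "i < j \<and> j < k \<and> k < 5"
    then have "orient (A (4 - k)) (A (4 - j)) (A (4 - i)) < 0"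
      using neg[rule_format, of "4 - k" "4 - j" "4 - i"] by linarith
    then show "orient (A (4 - i)) (A (4 - j)) (A (4 - k)) > 0"
      by (simp add: orient_reverse[of "A (4 - k)"])
  qed
qed

lemma convex_pentagon_iff_ccw:
  "convex_pentagon A \<longleftrightarrow> ccw_pentagon A \<or> ccw_pentagon (reverse_pentagon A)"
  unfolding convex_pentagon_def ccw_reverse_pentagon_iff by (simp only: ccw_pentagon_def)

lemma convex_hull_ccw_pentagon_subset_edges:
  assumes "ccw_pentagon A"
  defines "H \<equiv> convex hull {A 0, A 1, A 2, A 3, A 4}"
  shows "H \<subseteq> {x. orient (A 0) (A 1) x \<ge> 0}" "H \<subseteq> {x. orient (A 1) (A 2) x \<ge> 0}"
    "H \<subseteq> {x. orient (A 2) (A 3) x \<ge> 0}" "H \<subseteq> {x. orient (A 3) (A 4) x \<ge> 0}"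
    "H \<subseteq> {x. orient (A 4) (A 0) x \<ge> 0}"
proof -
  note pos = ccw_pentagonD[OF assms(1)]
  show "H \<subseteq> {x. orient (A 0) (A 1) x \<ge> 0}"
    using pos
    unfolding H_def by (intro convex_hull_subset_orient_ge) (simp add: orient_degenerate less_imp_le)
  show "H \<subseteq> {x. orient (A 1) (A 2) x \<ge> 0}"
    using pos orient_rotate[of "A 0" "A 1" "A 2"]
    unfolding H_def by (intro convex_hull_subset_orient_ge) (simp add: orient_degenerate less_imp_le)
  show "H \<subseteq> {x. orient (A 2) (A 3) x \<ge> 0}"
    using pos orient_rotate[of "A 0" "A 2" "A 3"] orient_rotate[of "A 1" "A 2" "A 3"]
    unfolding H_def by (intro convex_hull_subset_orient_ge) (simp add: orient_degenerate less_imp_le)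
  show "H \<subseteq> {x. orient (A 3) (A 4) x \<ge> 0}"
    using pos orient_rotate[of "A 0" "A 3" "A 4"] orient_rotate[of "A 1" "A 3" "A 4"]
      orient_rotate[of "A 2" "A 3" "A 4"]
    unfolding H_def by (intro convex_hull_subset_orient_ge) (simp add: orient_degenerate less_imp_le)
  show "H \<subseteq> {x. orient (A 4) (A 0) x \<ge> 0}"
    using pos orient_rotate[of "A 4" "A 0"]
    unfolding H_def by (intro convex_hull_subset_orient_ge) (simp add: orient_degenerate less_imp_le)
qed

lemma convex_hull_pentagon_eq_fan:
  assumes "ccw_pentagon A"
  shows "convex hull {A 0, A 1, A 2, A 3, A 4} =
    convex hull {A 0, A 1, A 2} \<union> convex hull {A 0, A 2, A 3} \<union> convex hull {A 0, A 3, A 4}"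
    (is "?H = ?T1 \<union> ?T2 \<union> ?T3")
proof
  show "?T1 \<union> ?T2 \<union> ?T3 \<subseteq> ?H"
    by (intro Un_least hull_mono) auto
next
  note pos = ccw_pentagonD[OF assms]
  show "?H \<subseteq> ?T1 \<union> ?T2 \<union> ?T3"
  proof
    fix x assume "x \<in> ?H"
    then have edges: "orient (A 0) (A 1) x \<ge> 0" "orient (A 1) (A 2) x \<ge> 0"
      "orient (A 2) (A 3) x \<ge> 0" "orient (A 3) (A 4) x \<ge> 0" "orient (A 4) (A 0) x \<ge> 0"
      using convex_hull_ccw_pentagon_subset_edges[OF assms] by blast+
    consider "orient (A 0) (A 2) x \<le> 0" | "orient (A 0) (A 2) x \<ge> 0" "orient (A 0) (A 3) x \<le> 0"
      | "orient (A 0) (A 3) x \<ge> 0"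
      by linarith
    then show "x \<in> ?T1 \<union> ?T2 \<union> ?T3"
    proof cases
      case 1
      then have "orient (A 2) (A 0) x \<ge> 0"
        using orient_swap_12[of "A 2" "A 0" x] by linarith
      from in_convex_hull_triangle_if_orient_nonneg[OF pos(1) edges(2) this edges(1)]
      show ?thesis by blast
    next
      case 2
      then have "orient (A 3) (A 0) x \<ge> 0"
        using orient_swap_12[of "A 3" "A 0" x] by linarith
      with \<open>orient (A 0) (A 2) x \<ge> 0\<close>
      have "x \<in> ?T2" by (intro in_convex_hull_triangle_if_orient_nonneg pos(4) edges(3))
      then show ?thesis by blast
    next
      case 3
      from in_convex_hull_triangle_if_orient_nonneg[OF pos(6) edges(4) edges(5) this]
      show ?thesis by blast
    qed
  qed
qed

lemma pent_area_ccw: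
  assumes "ccw_pentagon A"
  shows "pent_area A =
    (orient (A 0) (A 1) (A 2) + orient (A 0) (A 2) (A 3) + orient (A 0) (A 3) (A 4)) / 2"
proof -
  note pos = ccw_pentagonD[OF assms]
  define T1 where "T1 = convex hull {A 0, A 1, A 2}"
  define T2 where "T2 = convex hull {A 0, A 2, A 3}"
  define T3 where "T3 = convex hull {A 0, A 3, A 4}"
  have "T1 \<in> lmeasurable" "T2 \<in> lmeasurable" "T3 \<in> lmeasurable"
    unfolding T1_def T2_def T3_def
    by (auto intro!: lmeasurable_compact finite_imp_compact_convex_hull)
  moreover have "negligible (T1 \<inter> T2)" "negligible (T1 \<inter> T3)" "negligible (T2 \<inter> T3)"
  proof -
    have T1: "T1 \<subseteq> {x. orient (A 0) (A 2) x \<le> 0}"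
      unfolding T1_def using pos(1) orient_swap_23[of "A 0" "A 2" "A 1"]
      by (intro convex_hull_subset_orient_le) (simp add: orient_degenerate)
    have T2: "T2 \<subseteq> {x. orient (A 0) (A 2) x \<ge> 0}" "T2 \<subseteq> {x. orient (A 0) (A 3) x \<le> 0}"
      unfolding T2_def using pos(4) orient_swap_23[of "A 0" "A 3" "A 2"]
      by (intro convex_hull_subset_orient_ge convex_hull_subset_orient_le; simp add: orient_degenerate)+
    have T3: "T3 \<subseteq> {x. orient (A 0) (A 2) x \<ge> 0}" "T3 \<subseteq> {x. orient (A 0) (A 3) x \<ge> 0}"
      unfolding T3_def using pos(4-6)
      by (intro convex_hull_subset_orient_ge; simp add: orient_degenerate less_imp_le)+
    have "A 0 \<noteq> A 2" "A 0 \<noteq> A 3"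
      using pos(4) by (auto simp: orient_degenerate)
    then show "negligible (T1 \<inter> T2)" "negligible (T1 \<inter> T3)" "negligible (T2 \<inter> T3)"
      using negligible_Int_opposite_sides T1 T2 T3 by blast+
  qed
  moreover have "T1 \<union> T2 \<union> T3 = convex hull {A 0, A 1, A 2, A 3, A 4}"
    unfolding T1_def T2_def T3_def using convex_hull_pentagon_eq_fan[OF assms] by simp
  ultimately have "pent_area A = measure lebesgue T1 + measure lebesgue T2 + measure lebesgue T3"
    unfolding pent_area_def by (rule measure_Un3_negligible)
  then show ?thesis
    using pos unfolding T1_def T2_def T3_def tri_area_def[symmetric] tri_area_eq_orient by simp
qed

lemma Omega_eq_orient:
  "Omega A = (\<bar>orient (A 0) (A 1) (A 2)\<bar> + \<bar>orient (A 1) (A 2) (A 3)\<bar> + \<bar>orient (A 2) (A 3) (A 4)\<bar>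
    + \<bar>orient (A 3) (A 4) (A 0)\<bar> + \<bar>orient (A 4) (A 0) (A 1)\<bar>) / 2"
proof -
  have "{..<5::nat} = {0, 1, 2, 3, 4}" by auto
  then show ?thesis
    unfolding Omega_def tri_area_eq_orient by (simp add: add_divide_distrib numeral_2_eq_2)
qed

lemma Omega_reverse_pentagon: "Omega (reverse_pentagon A) = Omega A"
proof -
  have "\<bar>orient c b a\<bar> = \<bar>orient a b c\<bar>" for a b c :: "real^2"
    by (simp add: orient_reverse[of c])
  then show ?thesis
    unfolding Omega_eq_orient by (simp add: reverse_pentagon_def)
qed

lemma pent_area_reverse_pentagon: "pent_area (reverse_pentagon A) = pent_area A"
proof -
  have "{A 4, A 3, A 2, A 1, A 0} = {A 0, A 1, A 2, A 3, A 4}" by auto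
  then show ?thesis unfolding pent_area_def by (simp add: reverse_pentagon_def)
qed

lemma twice_fan_minus_consecutive_orient:
  "2 * (orient a0 a1 a2 + orient a0 a2 a3 + orient a0 a3 a4)
     - (orient a0 a1 a2 + orient a1 a2 a3 + orient a2 a3 a4 + orient a3 a4 a0 + orient a4 a0 a1)
   = orient a0 a2 a4 + orient a0 a1 a3 - orient a0 a1 a4"
  unfolding orient_def by algebra

lemma Omega_lt_twice_pent_area_ccw:
  assumes "ccw_pentagon A"
  shows "Omega A < 2 * pent_area A"
proof -
  note pos = ccw_pentagonD[OF assms]
  define T where "T = orient (A 0) (A 2) (A 4) + orient (A 0) (A 1) (A 3) - orient (A 0) (A 1) (A 4)"
  have "T > 0"
  proof (cases "orient (A 0) (A 1) (A 3) \<ge> orient (A 0) (A 1) (A 4)")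
    case True
    then show ?thesis unfolding T_def using pos(5) by linarith
  next
    case False
    have "T * orient (A 1) (A 3) (A 4) = orient (A 2) (A 3) (A 4) * orient (A 0) (A 1) (A 3)
        + orient (A 1) (A 2) (A 4) * orient (A 1) (A 3) (A 4)
        + orient (A 1) (A 2) (A 3) * (orient (A 0) (A 1) (A 4) - orient (A 0) (A 1) (A 3))"
      unfolding T_def orient_def by algebra
    also have "\<dots> > 0"
      using False pos by (intro add_pos_nonneg add_pos_pos mult_pos_pos mult_nonneg_nonneg) auto
    finally show ?thesis using pos(9) zero_less_mult_pos2 by blast
  qed
  moreover have "orient (A 3) (A 4) (A 0) > 0" "orient (A 4) (A 0) (A 1) > 0"
    using pos(6) orient_rotate[of "A 0" "A 3" "A 4"] pos(3) orient_rotate[of "A 4" "A 0" "A 1"]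
    by linarith+
  ultimately show ?thesis
    using pos twice_fan_minus_consecutive_orient[of "A 0" "A 1" "A 2" "A 3" "A 4"]
    unfolding Omega_eq_orient pent_area_ccw[OF assms] T_def by simp
qed

lemma Omega_lt_twice_pent_area:
  assumes "convex_pentagon A"
  shows "Omega A < 2 * pent_area A"
  using assms Omega_lt_twice_pent_area_ccw[of A] Omega_lt_twice_pent_area_ccw[of "reverse_pentagon A"]
  unfolding convex_pentagon_iff_ccw Omega_reverse_pentagon pent_area_reverse_pentagon by blast

definition squeezed_pentagon :: "real \<Rightarrow> nat \<Rightarrow> real^2" where
  "squeezed_pentagon e k =
    (if k = 0 then vector [e, -e] else if k = 1 then vector [1, 0] else if k = 2 then vector [0, 1]
     else if k = 3 then vector [-1, 0] else vector [-e, -e])"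

lemma orient_squeezed_pentagon:
  fixes e :: real
  defines "P \<equiv> squeezed_pentagon e"
  shows "orient (P 0) (P 1) (P 2) = 1" "orient (P 0) (P 1) (P 3) = 2 * e"
    "orient (P 0) (P 1) (P 4) = 2 * e^2" "orient (P 0) (P 2) (P 3) = 1 + 2 * e"
    "orient (P 0) (P 2) (P 4) = 2 * e * (1 + e)" "orient (P 0) (P 3) (P 4) = 2 * e^2"
    "orient (P 1) (P 2) (P 3) = 2" "orient (P 1) (P 2) (P 4) = 1 + 2 * e"
    "orient (P 1) (P 3) (P 4) = 2 * e" "orient (P 2) (P 3) (P 4) = 1"
    "orient (P 3) (P 4) (P 0) = 2 * e^2" "orient (P 4) (P 0) (P 1) = 2 * e^2"
  unfolding P_def squeezed_pentagon_def
  by (simp_all add: orient_def power2_eq_square algebra_simps)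

lemma ccw_squeezed_pentagon: "e > 0 \<Longrightarrow> ccw_pentagon (squeezed_pentagon e)"
  by (rule ccw_pentagonI) (use orient_squeezed_pentagon[of e] in simp_all)

lemma Omega_squeezed_pentagon: "Omega (squeezed_pentagon e) = 2 + 2 * e^2"
  using orient_squeezed_pentagon[of e] unfolding Omega_eq_orient by simp

lemma pent_area_squeezed_pentagon: "e > 0 \<Longrightarrow> pent_area (squeezed_pentagon e) = 1 + e + e^2"
  using orient_squeezed_pentagon[of e]
  by (simp add: pent_area_ccw ccw_squeezed_pentagon algebra_simps)

lemma exists_convex_pentagon_Omega_gt:
  assumes "\<eta> < 2"
  shows "\<exists>A. convex_pentagon A \<and> Omega A > \<eta> * pent_area A"
proof -
  define e where "e = (2 - \<eta>) / 4"
  have "e > 0" using assms by (simp add: e_def)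
  have "\<eta> * e < 2 * e" using \<open>e > 0\<close> assms by simp
  also have "\<dots> < 2 - \<eta>" using assms by (simp add: e_def)
  also have "\<dots> \<le> (2 - \<eta>) * (1 + e^2)" using assms by simp
  finally have "\<eta> * (1 + e + e^2) < 2 + 2 * e^2" by (simp add: algebra_simps)
  with \<open>e > 0\<close> show ?thesis
    by (intro exI[of _ "squeezed_pentagon e"])
      (simp add: convex_pentagon_iff_ccw ccw_squeezed_pentagon Omega_squeezed_pentagon
        pent_area_squeezed_pentagon)
qed

theorem lemma3p3:
  shows "(\<forall>A. convex_pentagon A \<longrightarrow> Omega A < 2 * pent_area A) \<and>
         (\<forall>\<eta>::real. \<eta> < 2 \<longrightarrow> (\<exists>A. convex_pentagon A \<and> Omega A > \<eta> * pent_area A))"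
  using Omega_lt_twice_pent_area exists_convex_pentagon_Omega_gt by blast

end
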